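(* Let $P$ be a graded poset and $\sim$ a Reiner–Stamate equivalence relation on $\operatorname{Int}(P)$. Then the projection functor $\pi:P\to P/\sim$, $a\mapsto[a]$, $f\mapsto[f]$, is an almost discrete fibration such that every morphism of $P/\sim$ has a lift in $P$.
   Context: A graded poset has a rank function $\rho$ with $\rho(b)=\rho(a)+1$ when $b$ covers $a$; it is regarded as a category with a unique morphism $a\to b$ iff $a\le b$. $\operatorname{Int}(P)$ is the set of closed intervals $[a,b]$, $a\le b$, identified with the morphisms $a\le b$. An equivalence relation $\sim$ on $\operatorname{Int}(P)$ is Reiner–Stamate if: (A1) $[a,b]\sim[a',b']$ and $[b,c]\sim[b',c']$ imply $[a,c]\sim[a',c']$; (A2) with $\mathrm{int}_{[a,b]}:[a,b]\to(\operatorname{Int}(P)/\sim)^2$, $c\mapsto(\widetilde{[a,c]},\widetilde{[c,b]})$, whenever $[a,b]\sim[a',b']$ there is a unique map $\tau:[a,b]\to[a',b']$ with $\mathrm{int}_{[a',b']}\circ\tau=\mathrm{int}_{[a,b]}$; (A4) writing $x\sim y$ for $[x,x]\sim[y,y]$, if $a\le b_1$, $b_2\le c$, $b_1\sim b_2$, there exist $a'\le b'\le c'$ with $[a,b_1]\sim[a',b']$ and $[b_2,c]\sim[b',c']$. The quotient category $P/\sim$ has objects the classes $[a]$ of elements of $P$ under $x\sim y$, morphisms the classes $[a\le b]$ of intervals, and composition $[b_2\le c]\circ[a\le b_1]=[a'\le c']$ for $a'\le b'\le c'$ as in (A4); it is an indiscretely based category. A factorization $q=g_0\circ\cdots\circ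 g_{n+1}$ ($n\ge0$) is nontrivial if no $g_i$ is an isomorphism. A functor $F:\mathcal C\to\mathcal D$ is an almost discrete fibration if for every morphism $q$ of $\mathcal D$, every $p$ with $F(p)=q$ and every nontrivial factorization $q=g_0\circ\cdots\circ g_{n+1}$ there is a nontrivial factorization $p=f_0\circ\cdots\circ f_{n+1}$ with $F(f_i)=g_i$, unique up to $(f_i)\sim(f'_i)$ iff there are isomorphisms $h_0,\dots,h_n$ with $f'_0=f_0\circ h_0$, $f'_i=h_{i-1}^{-1}\circ f_i\circ h_i$ ($1\le i\le n$), $f'_{n+1}=h_n^{-1}\circ f_{n+1}$. *)

theory Defs
  imports Main "HOL-Library.FuncSet"
begin

record ('o, 'm) cat =
  Ob   :: "'o set"
  Mor  :: "'m set"
  Dom  :: "'m \<Rightarrow> 'o"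
  Cod  :: "'m \<Rightarrow> 'o"
  Comp :: "'m \<Rightarrow> 'm \<Rightarrow> 'm"   (* Comp C g f = g \<circ> f *)
  Id   :: "'o \<Rightarrow> 'm"

definition cat_iso :: "('o, 'm, 'x) cat_scheme \<Rightarrow> 'm \<Rightarrow> bool" where
  "cat_iso C f \<longleftrightarrow> f \<in> Mor C \<and>
     (\<exists>g\<in>Mor C. Dom C g = Cod C f \<and> Cod C g = Dom C f \<and>
        Comp C g f = Id C (Dom C f) \<and> Comp C f g = Id C (Cod C f))"

definition cat_inv :: "('o, 'm, 'x) cat_scheme \<Rightarrow> 'm \<Rightarrow> 'm" where
  "cat_inv C f = (THE g. g \<in> Mor C \<and> Dom C g = Cod C f \<and> Cod C g = Dom C f \<and>
        Comp C g f = Id C (Dom C f) \<and> Comp C f g = Id C (Cod C f))"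

fun lcomp :: "('o, 'm, 'x) cat_scheme \<Rightarrow> 'm list \<Rightarrow> 'm" where
  "lcomp C [] = undefined"
| "lcomp C [g] = g"
| "lcomp C (g # h # gs) = Comp C g (lcomp C (h # gs))"

text \<open>A factorization q = g0 \<circ> ... \<circ> g(n+1), n \<ge> 0, given as the list [g0,...,g(n+1)].\<close>
definition is_factorization :: "('o, 'm, 'x) cat_scheme \<Rightarrow> 'm \<Rightarrow> 'm list \<Rightarrow> bool" where
  "is_factorization C q gs \<longleftrightarrow> length gs \<ge> 2 \<and> set gs \<subseteq> Mor C \<and>
     (\<forall>i. Suc i < length gs \<longrightarrow> Dom C (gs ! i) = Cod C (gs ! Suc i)) \<and>
     lcomp C gs = q"

definition nontrivial_fact :: "('o, 'm, 'x) cat_scheme \<Rightarrow> 'm list \<Rightarrow> bool" where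
  "nontrivial_fact C gs \<longleftrightarrow> (\<forall>g\<in>set gs. \<not> cat_iso C g)"

definition fact_equiv :: "('o, 'm, 'x) cat_scheme \<Rightarrow> 'm list \<Rightarrow> 'm list \<Rightarrow> bool" where
  "fact_equiv C fs fs' \<longleftrightarrow> length fs' = length fs \<and>
     (\<exists>hs. length hs + 1 = length fs \<and>
        (\<forall>i < length hs. cat_iso C (hs ! i) \<and> Cod C (hs ! i) = Dom C (fs ! i)) \<and>
        fs' ! 0 = Comp C (fs ! 0) (hs ! 0) \<and>
        (\<forall>i. 1 \<le> i \<and> i < length hs \<longrightarrow>
            fs' ! i = Comp C (cat_inv C (hs ! (i - 1))) (Comp C (fs ! i) (hs ! i))) \<and>
        fs' ! length hs = Comp C (cat_inv C (hs ! (length hs - 1))) (fs ! length hs))"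

definition is_functor ::
  "('o, 'm, 'x) cat_scheme \<Rightarrow> ('p, 'n, 'y) cat_scheme \<Rightarrow> ('o \<Rightarrow> 'p) \<Rightarrow> ('m \<Rightarrow> 'n) \<Rightarrow> bool" where
  "is_functor C D Fo Fm \<longleftrightarrow>
     (\<forall>x\<in>Ob C. Fo x \<in> Ob D) \<and>
     (\<forall>f\<in>Mor C. Fm f \<in> Mor D \<and> Dom D (Fm f) = Fo (Dom C f) \<and> Cod D (Fm f) = Fo (Cod C f)) \<and>
     (\<forall>f\<in>Mor C. \<forall>g\<in>Mor C. Dom C g = Cod C f \<longrightarrow> Fm (Comp C g f) = Comp D (Fm g) (Fm f)) \<and>
     (\<forall>x\<in>Ob C. Fm (Id C x) = Id D (Fo x))"

definition almost_discrete_fibration ::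
  "('o, 'm, 'x) cat_scheme \<Rightarrow> ('p, 'n, 'y) cat_scheme \<Rightarrow> ('o \<Rightarrow> 'p) \<Rightarrow> ('m \<Rightarrow> 'n) \<Rightarrow> bool" where
  "almost_discrete_fibration C D Fo Fm \<longleftrightarrow> is_functor C D Fo Fm \<and>
     (\<forall>q\<in>Mor D. \<forall>p\<in>Mor C. Fm p = q \<longrightarrow>
        (\<forall>gs. is_factorization D q gs \<and> nontrivial_fact D gs \<longrightarrow>
           (\<exists>fs. is_factorization C p fs \<and> nontrivial_fact C fs \<and> map Fm fs = gs) \<and>
           (\<forall>fs fs'. is_factorization C p fs \<and> nontrivial_fact C fs \<and> map Fm fs = gs \<and>
                     is_factorization C p fs' \<and> nontrivial_fact C fs' \<and> map Fm fs' = gs \<longrightarrow>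
                     fact_equiv C fs fs')))"

text \<open>The poset P is the whole type 'a (class order).\<close>

definition covers :: "'a::order \<Rightarrow> 'a \<Rightarrow> bool" where
  "covers b a \<longleftrightarrow> a < b \<and> \<not> (\<exists>c. a < c \<and> c < b)"

definition graded_by :: "('a::order \<Rightarrow> nat) \<Rightarrow> bool" where
  "graded_by \<rho> \<longleftrightarrow> (\<forall>a b. covers b a \<longrightarrow> \<rho> b = \<rho> a + 1)"

definition Intv :: "('a::order \<times> 'a) set" where
  "Intv = {(a, b). a \<le> b}"

definition elem_sim :: "(('a \<times> 'a) \<times> ('a \<times> 'a)) set \<Rightarrow> 'a \<Rightarrow> 'a \<Rightarrow> bool" where
  "elem_sim R x y \<longleftrightarrow> ((x, x), (y, y)) \<in> R"

definition int_map :: "(('a \<times> 'a) \<times> ('a \<times> 'a)) set \<Rightarrow> 'a \<Rightarrow> 'a \<Rightarrow> 'a \<Rightarrow> ('a \<times> 'a) set \<times> ('a \<times> 'a) set" where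
  "int_map R a b c = (R `` {(a, c)}, R `` {(c, b)})"

definition reiner_stamate :: "(('a::order \<times> 'a) \<times> ('a \<times> 'a)) set \<Rightarrow> bool" where
  "reiner_stamate R \<longleftrightarrow> equiv Intv R \<and>
     \<comment> \<open>(A1)\<close>
     (\<forall>a b c a' b' c'. ((a, b), (a', b')) \<in> R \<and> ((b, c), (b', c')) \<in> R \<longrightarrow> ((a, c), (a', c')) \<in> R) \<and>
     \<comment> \<open>(A2)\<close>
     (\<forall>a b a' b'. ((a, b), (a', b')) \<in> R \<longrightarrow>
        (\<exists>!\<tau>. \<tau> \<in> {a..b} \<rightarrow>\<^sub>E {a'..b'} \<and> (\<forall>c\<in>{a..b}. int_map R a' b' (\<tau> c) = int_map R a b c))) \<and>
     \<comment> \<open>(A4)\<close>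
     (\<forall>a b1 b2 c. a \<le> b1 \<and> b2 \<le> c \<and> elem_sim R b1 b2 \<longrightarrow>
        (\<exists>a' b' c'. a' \<le> b' \<and> b' \<le> c' \<and> ((a, b1), (a', b')) \<in> R \<and> ((b2, c), (b', c')) \<in> R))"

definition poset_cat :: "('a::order, 'a \<times> 'a) cat" where
  "poset_cat = \<lparr> Ob = UNIV, Mor = Intv, Dom = fst, Cod = snd,
                 Comp = (\<lambda>g f. (fst f, snd g)), Id = (\<lambda>a. (a, a)) \<rparr>"

definition obj_cls :: "(('a \<times> 'a) \<times> ('a \<times> 'a)) set \<Rightarrow> 'a \<Rightarrow> 'a set" where
  "obj_cls R x = {y. elem_sim R x y}"

definition rep :: "('a \<times> 'a) set \<Rightarrow> 'a \<times> 'a" where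
  "rep M = (SOME p. p \<in> M)"

definition quot_cat :: "(('a::order \<times> 'a) \<times> ('a \<times> 'a)) set \<Rightarrow> ('a set, ('a \<times> 'a) set) cat" where
  "quot_cat R = \<lparr>
     Ob = range (obj_cls R),
     Mor = {R `` {(a, b)} | a b. a \<le> b},
     Dom = (\<lambda>M. obj_cls R (fst (rep M))),
     Cod = (\<lambda>M. obj_cls R (snd (rep M))),
     Comp = (\<lambda>M2 M1. THE M. \<exists>a b1 b2 c a' b' c'.
               M1 = R `` {(a, b1)} \<and> M2 = R `` {(b2, c)} \<and> a \<le> b1 \<and> b2 \<le> c \<and>
               elem_sim R b1 b2 \<and> a' \<le> b' \<and> b' \<le> c' \<and>
               ((a, b1), (a', b')) \<in> R \<and> ((b2, c), (b', c')) \<in> R \<and> M = R `` {(a', c')}),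
     Id = (\<lambda>X. R `` {(a, a) | a. obj_cls R a = X}) \<rparr>"

end

theory Submission
  imports Defs
begin

(* Axiom (A2) makes R rigid: a self-map of an interval [a,b] preserving the classes of [a,c] and
   [c,b] for all c is the identity. So a point c of [a,b] is determined by these two classes, and
   lifts of factorizations along the projection are unique on the nose; their equivalence is then
   witnessed by identities. For existence, a composable pair in P/~ has adjacent representatives
   [a',b'], [b',c'] by (A4); if [a',c'] ~ [a,b], the map of (A2) sends b' to a point c of [a,b]
   with [a,c] ~ [a',b'] and [c,b] ~ [b',c'], and induction on the length of the factorization
   does the rest. Lifts are nontrivial since the only isomorphisms of P are the identities [x,x],
   whose classes are isomorphisms of P/~. *)

fun composable :: "('o, 'm, 'x) cat_scheme \<Rightarrow> 'm list \<Rightarrow> bool" where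
  "composable C (g # h # gs) \<longleftrightarrow> Dom C g = Cod C h \<and> composable C (h # gs)"
| "composable C _ \<longleftrightarrow> True"

lemma composable_iff_nth:
  "composable C gs \<longleftrightarrow> (\<forall>i. Suc i < length gs \<longrightarrow> Dom C (gs ! i) = Cod C (gs ! Suc i))"
proof (induction C gs rule: composable.induct)
  case (1 C g h gs)
  then show ?case
    by (simp add: All_less_Suc2)
qed auto

lemma is_factorization_iff:
  "is_factorization C q gs \<longleftrightarrow>
     2 \<le> length gs \<and> set gs \<subseteq> Mor C \<and> composable C gs \<and> lcomp C gs = q"
  by (auto simp: is_factorization_def composable_iff_nth)

lemma poset_cat_simps [simp]:
  "Ob poset_cat = UNIV" "Mor poset_cat = Intv" "Dom poset_cat = fst" "Cod poset_cat = snd"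
  "Comp poset_cat = (\<lambda>g f. (fst f, snd g))" "Id poset_cat = (\<lambda>a. (a, a))"
  by (simp_all add: poset_cat_def)

lemma mem_Intv_iff [simp]: "(a, b) \<in> Intv \<longleftrightarrow> a \<le> b"
  by (simp add: Intv_def)

lemma poset_cat_iso_iff: "cat_iso poset_cat f \<longleftrightarrow> (\<exists>x. f = (x, x))"
  by (cases f) (auto simp: cat_iso_def intro: order.antisym bexI[of _ f])

lemma poset_cat_inv_id: "cat_inv poset_cat (x, x) = (x, x)"
  unfolding cat_inv_def by (rule the_equality) auto

lemma poset_lcomp: "fs \<noteq> [] \<Longrightarrow> lcomp poset_cat fs = (fst (last fs), snd (hd fs))"
  by (induction fs rule: induct_list012) auto

lemma poset_lcomp_in_Intv:
  "fs \<noteq> [] \<Longrightarrow> set fs \<subseteq> Intv \<Longrightarrow> composable poset_cat fs \<Longrightarrow> lcomp poset_cat fs \<in> Intv"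
  by (induction fs rule: induct_list012) (auto simp: Intv_def poset_lcomp intro: order_trans)

lemma poset_fact_equiv_refl:
  assumes "2 \<le> length fs" and "composable poset_cat fs"
  shows "fact_equiv poset_cat fs fs"
proof -
  define hs where "hs = map (\<lambda>f. (fst f, fst f)) (butlast fs)"
  have len: "length hs + 1 = length fs"
    using assms(1) by (simp add: hs_def)
  have hs_nth: "hs ! i = (fst (fs ! i), fst (fs ! i))" if "i < length hs" for i
    using that by (simp add: hs_def nth_butlast)
  have adj: "fst (fs ! (i - 1)) = snd (fs ! i)" if "0 < i" "i < length fs" for i
    using assms(2) that by (simp add: composable_iff_nth)
  have "0 < length hs"
    using assms(1) len by linarith
  then have "hs ! 0 = (fst (fs ! 0), fst (fs ! 0))"
    and "hs ! (length hs - 1) = (snd (fs ! length hs), snd (fs ! length hs))"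
    using hs_nth adj[of "length hs"] len by auto
  then show ?thesis
    unfolding fact_equiv_def using len hs_nth adj
    by (intro conjI exI[of _ hs] allI impI) (auto simp: poset_cat_iso_iff poset_cat_inv_id)
qed

locale reiner_stamate_rel =
  fixes R :: "(('a::order \<times> 'a) \<times> ('a \<times> 'a)) set"
  assumes reiner_stamate: "reiner_stamate R"
begin

lemma equiv_Intv: "equiv Intv R"
  using reiner_stamate by (simp add: reiner_stamate_def)

lemma comp_compatible:
  "((a, b), (a', b')) \<in> R \<Longrightarrow> ((b, c), (b', c')) \<in> R \<Longrightarrow> ((a, c), (a', c')) \<in> R"
  using reiner_stamate unfolding reiner_stamate_def by meson

lemma int_map_transport:
  "((a, b), (a', b')) \<in> R \<Longrightarrow>
     \<exists>!\<tau>. \<tau> \<in> {a..b} \<rightarrow>\<^sub>E {a'..b'} \<and> (\<forall>c\<in>{a..b}. int_map R a' b' (\<tau> c) = int_map R a b c)"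
  using reiner_stamate unfolding reiner_stamate_def by metis

lemma composable_representatives:
  "a \<le> b1 \<Longrightarrow> b2 \<le> c \<Longrightarrow> elem_sim R b1 b2 \<Longrightarrow>
     \<exists>a' b' c'. a' \<le> b' \<and> b' \<le> c' \<and> ((a, b1), (a', b')) \<in> R \<and> ((b2, c), (b', c')) \<in> R"
  using reiner_stamate unfolding reiner_stamate_def by meson

lemma R_le: "((a, b), (c, d)) \<in> R \<Longrightarrow> a \<le> b \<and> c \<le> d"
  using equiv_type[OF equiv_Intv] by (auto simp: Intv_def)

lemma R_refl: "a \<le> b \<Longrightarrow> ((a, b), (a, b)) \<in> R"
  using equiv_Intv by (simp add: equiv_def refl_on_def)

lemma R_sym: "(p, q) \<in> R \<Longrightarrow> (q, p) \<in> R"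
  using equiv_Intv by (meson equiv_def symD)

lemma R_trans: "(p, q) \<in> R \<Longrightarrow> (q, r) \<in> R \<Longrightarrow> (p, r) \<in> R"
  using equiv_Intv by (meson equiv_def transD)

lemma class_eq_iff:
  "a \<le> b \<Longrightarrow> c \<le> d \<Longrightarrow> R `` {(a, b)} = R `` {(c, d)} \<longleftrightarrow> ((a, b), (c, d)) \<in> R"
  using eq_equiv_class_iff[OF equiv_Intv] by simp

lemma class_eqD: "a \<le> b \<Longrightarrow> R `` {(a, b)} = R `` {(c, d)} \<Longrightarrow> ((a, b), (c, d)) \<in> R"
  using R_refl R_sym by blast

lemma int_map_rigid:
  assumes "\<sigma> \<in> {a..b} \<rightarrow>\<^sub>E {a..b}"
    and "\<forall>d\<in>{a..b}. int_map R a b (\<sigma> d) = int_map R a b d"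
    and "c \<in> {a..b}"
  shows "\<sigma> c = c"
proof -
  have "a \<le> b"
    using assms(3) by auto
  moreover have "restrict id {a..b} \<in> {a..b} \<rightarrow>\<^sub>E {a..b}"
    and "\<forall>d\<in>{a..b}. int_map R a b (restrict id {a..b} d) = int_map R a b d"
    by auto
  ultimately have "\<sigma> = restrict id {a..b}"
    using int_map_transport[OF R_refl] assms(1,2) by blast
  then show ?thesis
    using assms(3) by simp
qed

lemma int_map_inj_on: "inj_on (int_map R a b) {a..b}"
proof
  fix c c' assume c: "c \<in> {a..b}" and c': "c' \<in> {a..b}"
    and eq: "int_map R a b c = int_map R a b c'"
  define swap where "swap = restrict (\<lambda>d. if d = c then c' else if d = c' then c else d) {a..b}"
  have "swap c = c"
    by (rule int_map_rigid) (use c c' eq in \<open>auto simp: swap_def\<close>)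
  then show "c = c'"
    using c unfolding swap_def by (auto split: if_splits)
qed

lemma R_point_imp_eq:
  assumes "((x, y), (z, z)) \<in> R"
  shows "x = y"
proof -
  obtain \<tau> where \<tau>: "\<tau> \<in> {x..y} \<rightarrow>\<^sub>E {z..z}"
    "\<forall>c\<in>{x..y}. int_map R z z (\<tau> c) = int_map R x y c"
    using int_map_transport[OF assms] by blast
  obtain \<tau>' where \<tau>': "\<tau>' \<in> {z..z} \<rightarrow>\<^sub>E {x..y}"
    "\<forall>c\<in>{z..z}. int_map R x y (\<tau>' c) = int_map R z z c"
    using int_map_transport[OF R_sym[OF assms]] by blast
  have \<tau>_const: "\<tau> c = z" if "c \<in> {x..y}" for c
    using \<tau>(1) that by auto
  have int_map_const: "int_map R x y c = int_map R z z z" if "c \<in> {x..y}" for c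
    using \<tau>(2) \<tau>_const that by metis
  \<comment> \<open>the round trip through the one-point interval is the identity, yet it is constant\<close>
  have "restrict (\<tau>' \<circ> \<tau>) {x..y} c = c" if "c \<in> {x..y}" for c
    by (rule int_map_rigid) (use \<tau>' \<tau>_const int_map_const that in \<open>auto\<close>)
  moreover have "x \<le> y"
    using R_le[OF assms] by blast
  ultimately show "x = y"
    using \<tau>_const by (metis atLeastAtMost_iff comp_apply order.refl restrict_apply')
qed

lemma R_imp_elem_sim_ends:
  assumes "((a, b), (a', b')) \<in> R"
  shows "elem_sim R a a'" and "elem_sim R b b'"
proof -
  obtain \<tau> where \<tau>: "\<forall>c\<in>{a..b}. int_map R a' b' (\<tau> c) = int_map R a b c"
    using int_map_transport[OF assms] by blast
  have "a \<le> b"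
    using R_le[OF assms] by blast
  then have "R `` {(a, a)} = R `` {(a', \<tau> a)}" and "R `` {(b, b)} = R `` {(\<tau> b, b')}"
    using \<tau> by (auto simp: int_map_def)
  then have lower: "((a, a), (a', \<tau> a)) \<in> R" and upper: "((b, b), (\<tau> b, b')) \<in> R"
    using class_eqD by blast+
  have "\<tau> a = a'" and "\<tau> b = b'"
    using R_point_imp_eq R_sym lower upper by metis+
  then show "elem_sim R a a'" and "elem_sim R b b'"
    using lower upper by (simp_all add: elem_sim_def)
qed

lemma equivp_elem_sim: "equivp (elem_sim R)"
  by (intro equivpI reflpI sympI transpI) (auto simp: elem_sim_def intro: R_refl R_sym R_trans)

lemma obj_cls_eq_iff: "obj_cls R x = obj_cls R y \<longleftrightarrow> elem_sim R x y"
  using equivp_elem_sim unfolding obj_cls_def equivp_def by (metis Collect_inj)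

lemma Mor_quot_cat: "M \<in> Mor (quot_cat R) \<longleftrightarrow> (\<exists>a b. a \<le> b \<and> M = R `` {(a, b)})"
  by (auto simp: quot_cat_def)

lemma rep_class: "a \<le> b \<Longrightarrow> ((a, b), rep (R `` {(a, b)})) \<in> R"
  unfolding rep_def by (rule someI2[of "\<lambda>p. p \<in> R `` {(a, b)}"]) (auto intro: R_refl)

lemma Dom_Cod_quot_cat:
  assumes "a \<le> b"
  shows Dom_quot_cat: "Dom (quot_cat R) (R `` {(a, b)}) = obj_cls R a"
    and Cod_quot_cat: "Cod (quot_cat R) (R `` {(a, b)}) = obj_cls R b"
proof -
  obtain x y where xy: "rep (R `` {(a, b)}) = (x, y)"
    by fastforce
  then have "elem_sim R a x" and "elem_sim R b y"
    using R_imp_elem_sim_ends rep_class[OF assms] by metis+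
  then have "obj_cls R a = obj_cls R x" and "obj_cls R b = obj_cls R y"
    by (simp_all add: obj_cls_eq_iff)
  with xy show "Dom (quot_cat R) (R `` {(a, b)}) = obj_cls R a"
    and "Cod (quot_cat R) (R `` {(a, b)}) = obj_cls R b"
    by (simp_all add: quot_cat_def)
qed

lemma Id_quot_cat: "Id (quot_cat R) (obj_cls R x) = R `` {(x, x)}"
proof -
  have "R `` {(a, a)} = R `` {(x, x)}" if "obj_cls R a = obj_cls R x" for a
    using that by (simp add: obj_cls_eq_iff class_eq_iff elem_sim_def)
  then have "R `` {(a, a) | a. obj_cls R a = obj_cls R x} = R `` {(x, x)}"
    by blast
  then show ?thesis
    by (simp add: quot_cat_def)
qed

lemma Comp_quot_cat:
  assumes "a \<le> b1" "b2 \<le> c" "elem_sim R b1 b2" "a' \<le> b'" "b' \<le> c'"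
    and "((a, b1), (a', b')) \<in> R" "((b2, c), (b', c')) \<in> R"
  shows "Comp (quot_cat R) (R `` {(b2, c)}) (R `` {(a, b1)}) = R `` {(a', c')}"
  unfolding quot_cat_def cat.simps
proof (rule the_equality, goal_cases)
  case 1
  show ?case
    using assms by blast
next
  case (2 M)
  then obtain a0 b10 b20 c0 a0' b0' c0' where
    cls: "R `` {(a, b1)} = R `` {(a0, b10)}" "R `` {(b2, c)} = R `` {(b20, c0)}"
    and le: "a0' \<le> b0'" "b0' \<le> c0'"
    and rel: "((a0, b10), (a0', b0')) \<in> R" "((b20, c0), (b0', c0')) \<in> R"
    and M: "M = R `` {(a0', c0')}"
    by blast
  have "((a', b'), (a0', b0')) \<in> R"
    by (rule R_trans[OF R_trans[OF R_sym[OF assms(6)] class_eqD[OF assms(1) cls(1)]] rel(1)])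
  moreover have "((b', c'), (b0', c0')) \<in> R"
    by (rule R_trans[OF R_trans[OF R_sym[OF assms(7)] class_eqD[OF assms(2) cls(2)]] rel(2)])
  ultimately have "((a', c'), (a0', c0')) \<in> R"
    by (rule comp_compatible)
  moreover have "a' \<le> c'" and "a0' \<le> c0'"
    using assms(4,5) le by (blast intro: order_trans)+
  ultimately show ?case
    using M class_eq_iff by (simp add: R_sym)
qed

lemma Comp_quot_cat_adjacent:
  "a \<le> b \<Longrightarrow> b \<le> c \<Longrightarrow> Comp (quot_cat R) (R `` {(b, c)}) (R `` {(a, b)}) = R `` {(a, c)}"
  using Comp_quot_cat[of a b b c a b c] equivp_reflp[OF equivp_elem_sim] R_refl by blast

lemma quot_cat_composableE:
  assumes "M1 \<in> Mor (quot_cat R)" "M2 \<in> Mor (quot_cat R)"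
    and "Dom (quot_cat R) M2 = Cod (quot_cat R) M1"
  obtains a b c where "a \<le> b" "b \<le> c" "M1 = R `` {(a, b)}" "M2 = R `` {(b, c)}"
proof -
  obtain a b1 where ab1: "a \<le> b1" "M1 = R `` {(a, b1)}"
    using assms(1) Mor_quot_cat by blast
  obtain b2 c where b2c: "b2 \<le> c" "M2 = R `` {(b2, c)}"
    using assms(2) Mor_quot_cat by blast
  have "obj_cls R b1 = obj_cls R b2"
    using assms(3) ab1 b2c by (simp add: Dom_quot_cat Cod_quot_cat)
  then have "elem_sim R b1 b2"
    by (simp add: obj_cls_eq_iff)
  then obtain a' b' c' where "a' \<le> b'" "b' \<le> c'" "((a, b1), (a', b')) \<in> R" "((b2, c), (b', c')) \<in> R"
    using composable_representatives ab1(1) b2c(1) by blast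
  then show thesis
    using that ab1 b2c class_eq_iff by simp
qed

lemma cat_iso_quot_point: "cat_iso (quot_cat R) (R `` {(x, x)})"
proof -
  have "R `` {(x, x)} \<in> Mor (quot_cat R)"
    unfolding Mor_quot_cat by (blast intro: order.refl)
  then show ?thesis
    unfolding cat_iso_def
    by (intro conjI bexI[of _ "R `` {(x, x)}"])
      (simp_all add: Dom_quot_cat Cod_quot_cat Id_quot_cat Comp_quot_cat_adjacent)
qed

lemma quot_functor: "is_functor poset_cat (quot_cat R) (obj_cls R) (\<lambda>f. R `` {f})"
proof -
  have "R `` {f} \<in> Mor (quot_cat R) \<and> Dom (quot_cat R) (R `` {f}) = obj_cls R (fst f)
      \<and> Cod (quot_cat R) (R `` {f}) = obj_cls R (snd f)" if "f \<in> Intv" for f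
    using that by (cases f) (auto simp: Mor_quot_cat Dom_quot_cat Cod_quot_cat)
  moreover have "R `` {(fst f, snd g)} = Comp (quot_cat R) (R `` {g}) (R `` {f})"
    if "f \<in> Intv" "g \<in> Intv" "fst g = snd f" for f g
    using that by (cases f, cases g) (auto simp: Comp_quot_cat_adjacent)
  moreover have "Ob (quot_cat R) = range (obj_cls R)"
    by (simp add: quot_cat_def)
  ultimately show ?thesis
    by (simp add: is_functor_def Id_quot_cat)
qed

lemma quot_lcomp_closed:
  "gs \<noteq> [] \<Longrightarrow> set gs \<subseteq> Mor (quot_cat R) \<Longrightarrow> composable (quot_cat R) gs \<Longrightarrow>
    lcomp (quot_cat R) gs \<in> Mor (quot_cat R) \<and>
    Cod (quot_cat R) (lcomp (quot_cat R) gs) = Cod (quot_cat R) (hd gs)"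
proof (induction gs rule: induct_list012)
  case (3 g h gs)
  then have "lcomp (quot_cat R) (h # gs) \<in> Mor (quot_cat R)" and "g \<in> Mor (quot_cat R)"
    and "Dom (quot_cat R) g = Cod (quot_cat R) (lcomp (quot_cat R) (h # gs))"
    by simp_all
  then obtain a b c where "a \<le> b" "b \<le> c"
    "lcomp (quot_cat R) (h # gs) = R `` {(a, b)}" "g = R `` {(b, c)}"
    by (rule quot_cat_composableE)
  then show ?case
    by (auto simp: Comp_quot_cat_adjacent Mor_quot_cat Cod_quot_cat intro: order_trans)
qed simp_all

lemma quot_lcomp_map:
  "fs \<noteq> [] \<Longrightarrow> set fs \<subseteq> Intv \<Longrightarrow> composable poset_cat fs \<Longrightarrow>
    lcomp (quot_cat R) (map (\<lambda>f. R `` {f}) fs) = R `` {lcomp poset_cat fs}"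
proof (induction fs rule: induct_list012)
  case (3 f h fs)
  obtain c b where f: "f = (c, b)"
    by fastforce
  with 3 have "fst (last (h # fs)) \<le> c" and "c \<le> b"
    using poset_lcomp_in_Intv[of "h # fs"] by (auto simp: poset_lcomp simp del: last.simps)
  with 3 f show ?case
    by (simp add: poset_lcomp Comp_quot_cat_adjacent del: last.simps)
qed simp_all

lemma quot_comp_liftE:
  assumes "M1 \<in> Mor (quot_cat R)" "M2 \<in> Mor (quot_cat R)" "Dom (quot_cat R) M2 = Cod (quot_cat R) M1"
    and "Comp (quot_cat R) M2 M1 = R `` {(a, b)}" "a \<le> b"
  obtains c where "a \<le> c" "c \<le> b" "M1 = R `` {(a, c)}" "M2 = R `` {(c, b)}"
proof -
  obtain a' b' c' where le: "a' \<le> b'" "b' \<le> c'" and M: "M1 = R `` {(a', b')}" "M2 = R `` {(b', c')}"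
    using quot_cat_composableE[OF assms(1-3)] by blast
  then have "R `` {(a', c')} = R `` {(a, b)}"
    using assms(4) by (simp add: Comp_quot_cat_adjacent)
  then have "((a', c'), (a, b)) \<in> R"
    using le by (blast intro: class_eqD order_trans)
  then obtain \<tau> where \<tau>: "\<tau> \<in> {a'..c'} \<rightarrow>\<^sub>E {a..b}"
    "\<forall>d\<in>{a'..c'}. int_map R a b (\<tau> d) = int_map R a' c' d"
    using int_map_transport by blast
  have "b' \<in> {a'..c'}"
    using le by simp
  then show thesis
    using \<tau> M by (intro that[of "\<tau> b'"]) (auto simp: int_map_def)
qed

lemma lift_composable:
  "gs \<noteq> [] \<Longrightarrow> set gs \<subseteq> Mor (quot_cat R) \<Longrightarrow> composable (quot_cat R) gs \<Longrightarrow>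
    lcomp (quot_cat R) gs = R `` {(a, b)} \<Longrightarrow> a \<le> b \<Longrightarrow>
    \<exists>fs. set fs \<subseteq> Intv \<and> composable poset_cat fs \<and> lcomp poset_cat fs = (a, b) \<and>
      map (\<lambda>f. R `` {f}) fs = gs"
proof (induction gs arbitrary: a b rule: induct_list012)
  case (2 g)
  then show ?case
    by (intro exI[of _ "[(a, b)]"]) simp
next
  case (3 g h gs)
  then have "lcomp (quot_cat R) (h # gs) \<in> Mor (quot_cat R)" and "g \<in> Mor (quot_cat R)"
    and "Dom (quot_cat R) g = Cod (quot_cat R) (lcomp (quot_cat R) (h # gs))"
    and "Comp (quot_cat R) g (lcomp (quot_cat R) (h # gs)) = R `` {(a, b)}"
    using quot_lcomp_closed[of "h # gs"] by simp_all
  then obtain c where c: "a \<le> c" "c \<le> b"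
    and lcomp_eq: "lcomp (quot_cat R) (h # gs) = R `` {(a, c)}" and g: "g = R `` {(c, b)}"
    using \<open>a \<le> b\<close> by (rule quot_comp_liftE)
  have tail: "h # gs \<noteq> []" "set (h # gs) \<subseteq> Mor (quot_cat R)" "composable (quot_cat R) (h # gs)"
    using "3.prems"(2,3) by simp_all
  obtain fs where fs: "set fs \<subseteq> Intv" "composable poset_cat fs" "lcomp poset_cat fs = (a, c)"
    "map (\<lambda>f. R `` {f}) fs = h # gs"
    using "3.IH"(2)[OF tail lcomp_eq c(1)] by (elim exE conjE) (rule that)
  then obtain f1 fs1 where f1: "fs = f1 # fs1" and "snd f1 = c"
    using poset_lcomp[of fs] by (cases fs) auto
  have "lcomp poset_cat ((c, b) # fs) = (a, b)"
    using fs(3) f1 by simp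
  moreover have "composable poset_cat ((c, b) # fs)"
    using fs(2) f1 \<open>snd f1 = c\<close> by simp
  ultimately show ?case
    using fs(1,4) c g by (intro exI[of _ "(c, b) # fs"]) simp
qed simp

lemma lift_unique:
  "set fs \<subseteq> Intv \<Longrightarrow> composable poset_cat fs \<Longrightarrow> set fs' \<subseteq> Intv \<Longrightarrow> composable poset_cat fs' \<Longrightarrow>
    lcomp poset_cat fs = lcomp poset_cat fs' \<Longrightarrow> map (\<lambda>f. R `` {f}) fs = map (\<lambda>f. R `` {f}) fs' \<Longrightarrow>
    fs = fs'"
proof (induction fs arbitrary: fs' rule: induct_list012)
  case (3 f h fs)
  obtain f' h' fs'' where fs': "fs' = f' # h' # fs''"
    using "3.prems"(6) by (auto simp: Cons_eq_map_conv)
  obtain c b c' b' where f: "f = (c, b)" and f': "f' = (c', b')"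
    by fastforce
  define a where "a = fst (last (h # fs))"
  have lcomps: "lcomp poset_cat (h # fs) = (a, c)" "lcomp poset_cat (h' # fs'') = (a, c')"
    and "b' = b"
    using "3.prems" fs' f f' by (auto simp: a_def poset_lcomp simp del: last.simps)
  have in_interval: "c \<in> {a..b}" "c' \<in> {a..b}"
    using "3.prems" fs' poset_lcomp_in_Intv[of "h # fs"] poset_lcomp_in_Intv[of "h' # fs''"]
      lcomps f f' \<open>b' = b\<close>
    by auto
  have "R `` {(a, c)} = R `` {(a, c')}"
    using quot_lcomp_map[of "h # fs"] quot_lcomp_map[of "h' # fs''"] "3.prems" fs' lcomps by auto
  moreover have "R `` {(c, b)} = R `` {(c', b)}"
    using "3.prems"(6) fs' f f' \<open>b' = b\<close> by simp
  ultimately have "c = c'"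
    using inj_onD[OF int_map_inj_on _ in_interval] by (simp add: int_map_def)
  then show ?case
    using "3.IH"(2)[of "h' # fs''"] "3.prems" fs' lcomps f f' \<open>b' = b\<close> by auto
qed auto

lemma lift_factorization:
  assumes "p \<in> Intv" "is_factorization (quot_cat R) (R `` {p}) gs" "nontrivial_fact (quot_cat R) gs"
  shows "\<exists>fs. is_factorization poset_cat p fs \<and> nontrivial_fact poset_cat fs \<and>
    map (\<lambda>f. R `` {f}) fs = gs"
proof -
  obtain a b where p: "p = (a, b)" "a \<le> b"
    using assms(1) by (cases p) auto
  have gs: "2 \<le> length gs" "gs \<noteq> []" "set gs \<subseteq> Mor (quot_cat R)" "composable (quot_cat R) gs"
    "lcomp (quot_cat R) gs = R `` {(a, b)}"
    using assms(2) p(1) by (auto simp: is_factorization_iff)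
  obtain fs where fs: "set fs \<subseteq> Intv" "composable poset_cat fs" "lcomp poset_cat fs = (a, b)"
    "map (\<lambda>f. R `` {f}) fs = gs"
    using lift_composable[OF gs(2-5) p(2)] by (elim exE conjE) (rule that)
  have "nontrivial_fact poset_cat fs"
    using assms(3) fs(4) cat_iso_quot_point by (fastforce simp: nontrivial_fact_def poset_cat_iso_iff)
  moreover have "2 \<le> length fs"
    using gs(1) fs(4) by auto
  ultimately show ?thesis
    using fs p(1) by (auto simp: is_factorization_iff)
qed

lemma lift_factorization_unique:
  assumes "is_factorization poset_cat p fs" "is_factorization poset_cat p fs'"
    and "map (\<lambda>f. R `` {f}) fs = map (\<lambda>f. R `` {f}) fs'"
  shows "fact_equiv poset_cat fs fs'"
proof -
  have "fs = fs'"
    using assms lift_unique[of fs fs'] by (simp add: is_factorization_iff)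
  with assms(1) show ?thesis
    by (simp add: is_factorization_iff poset_fact_equiv_refl)
qed

end

theorem proposition3p7:
  fixes \<rho> :: "'a::order \<Rightarrow> nat"
    and R :: "(('a \<times> 'a) \<times> ('a \<times> 'a)) set"
  assumes "graded_by \<rho>"
    and "reiner_stamate R"
  shows "almost_discrete_fibration (poset_cat :: ('a, 'a \<times> 'a) cat) (quot_cat R)
           (obj_cls R) (\<lambda>(a, b). R `` {(a, b)})
         \<and> (\<forall>q \<in> Mor (quot_cat R). \<exists>p \<in> Mor (poset_cat :: ('a, 'a \<times> 'a) cat).
              (\<lambda>(a, b). R `` {(a, b)}) p = q)"
proof -
  interpret reiner_stamate_rel R
    using assms(2) by (rule reiner_stamate_rel.intro)
  have "almost_discrete_fibration (poset_cat :: ('a, 'a \<times> 'a) cat) (quot_cat R) (obj_cls R)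
      (\<lambda>f. R `` {f})"
    unfolding almost_discrete_fibration_def
    using quot_functor lift_factorization lift_factorization_unique by auto
  moreover have "\<forall>q \<in> Mor (quot_cat R). \<exists>p \<in> Mor (poset_cat :: ('a, 'a \<times> 'a) cat). R `` {p} = q"
    by (clarsimp simp: Mor_quot_cat) (metis mem_Intv_iff)
  moreover have "(\<lambda>(a, b). R `` {(a, b)}) = (\<lambda>f. R `` {f})"
    by auto
  ultimately show ?thesis
    by simp
qed

end
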